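(* Let $n\ge t+1$, $t\ge1$ and $s\ge2$. Then, as ideals of $S=K[x_1,\ldots,x_n]$, $$\bigl(I_t(L_{n-1})^s:u_{n-t+1}\bigr)+(x_{n-t})=\bigl(I_t(L_{n-t-1})^s,\,x_{n-t}\bigr).$$ In particular, if $n\le 2t$ then $I_t(L_{n-t-1})=0$ and the left-hand side equals $(x_{n-t})$.
   Context: $K$ is a field. For $1\le m\le n$ and $m\ge t$, $I_t(L_m)$ denotes the ideal of $S$ generated by $u_i=x_ix_{i+1}\cdots x_{i+t-1}$ for $i=1,\ldots,m-t+1$ (the $t$-path ideal of the line graph on $x_1,\ldots,x_m$); by convention $I_t(L_m)=0$ if $m<t$. Here $u_{n-t+1}=x_{n-t+1}\cdots x_n$. *)

theory Defs
  imports Main "HOL-Library.Poly_Mapping"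
begin

text \<open>Multivariate polynomials over a field K: finitely supported maps from
monomials (finitely supported exponent vectors) to coefficients; multiplication is
convolution (library instance).\<close>

type_synonym 'k mpoly = "(nat \<Rightarrow>\<^sub>0 nat) \<Rightarrow>\<^sub>0 'k"

definition var :: "nat \<Rightarrow> 'k::comm_ring_1 mpoly" where
  "var i = Poly_Mapping.single (Poly_Mapping.single i 1) 1"

definition polyring :: "nat \<Rightarrow> 'k::comm_ring_1 mpoly set" where
  "polyring n = {p :: 'k mpoly. \<forall>m \<in> Poly_Mapping.keys p. Poly_Mapping.keys m \<subseteq> {1..n}}"

definition ideal_gen :: "nat \<Rightarrow> 'k::comm_ring_1 mpoly set \<Rightarrow> 'k mpoly set" where
  "ideal_gen n G = {(\<Sum>g\<in>F. c g * g) | F c. finite F \<and> F \<subseteq> G \<and> (\<forall>g\<in>F. c g \<in> polyring n)}"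

definition ideal_mult :: "nat \<Rightarrow> 'k::comm_ring_1 mpoly set \<Rightarrow> 'k mpoly set \<Rightarrow> 'k mpoly set" where
  "ideal_mult n I J = ideal_gen n {a * b | a b. a \<in> I \<and> b \<in> J}"

fun ideal_pow :: "nat \<Rightarrow> 'k::comm_ring_1 mpoly set \<Rightarrow> nat \<Rightarrow> 'k mpoly set" where
  "ideal_pow n I 0 = polyring n"
| "ideal_pow n I (Suc s) = ideal_mult n (ideal_pow n I s) I"

definition colon :: "nat \<Rightarrow> 'k::comm_ring_1 mpoly set \<Rightarrow> 'k mpoly \<Rightarrow> 'k mpoly set" where
  "colon n I f = {g \<in> polyring n. g * f \<in> I}"

definition path_mon :: "nat \<Rightarrow> nat \<Rightarrow> 'k::comm_ring_1 mpoly" where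
  "path_mon t i = (\<Prod>j\<in>{i..<i+t}. var j)"

text \<open>I_t(L_m) as an ideal of S = K[x_1..x_n]; generated by u_1,...,u_{m-t+1};
  the zero ideal if m < t (empty generating set).\<close>
definition path_ideal :: "nat \<Rightarrow> nat \<Rightarrow> nat \<Rightarrow> 'k::comm_ring_1 mpoly set" where
  "path_ideal n t m = ideal_gen n {path_mon t i | i. 1 \<le> i \<and> i + t \<le> m + 1}"

end

theory Submission
  imports Defs
begin

text \<open>Substituting \<open>x\<^sub>n\<^sub>-\<^sub>t = 0\<close> is a ring endomorphism of \<open>S\<close> that sends every generator
  of \<open>I = I\<^sub>t(L\<^sub>n\<^sub>-\<^sub>1)\<close> either to \<open>0\<close> (if it contains \<open>x\<^sub>n\<^sub>-\<^sub>t\<close>) or to a generator of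
  \<open>J = I\<^sub>t(L\<^sub>n\<^sub>-\<^sub>t\<^sub>-\<^sub>1)\<close>; hence it maps \<open>I\<^sup>s\<close> into \<open>J\<^sup>s\<close>. If \<open>f u \<in> I\<^sup>s\<close>, then
  \<open>f|\<^sub>x\<^sub>=\<^sub>0 \<cdot> u \<in> J\<^sup>s\<close>, and since none of the variables of \<open>u = x\<^sub>n\<^sub>-\<^sub>t\<^sub>+\<^sub>1 \<cdots> x\<^sub>n\<close> occurs in
  the generators of \<open>J\<close>, the ideal \<open>J\<^sup>s\<close> is closed under taking the quotient by any of
  these variables, so \<open>u\<close> cancels: \<open>f|\<^sub>x\<^sub>=\<^sub>0 \<in> J\<^sup>s\<close>. Writing \<open>f = f|\<^sub>x\<^sub>=\<^sub>0 + x\<^sub>n\<^sub>-\<^sub>t g\<close>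
  gives one inclusion; the other holds because \<open>J \<subseteq> I\<close>.\<close>

lemma poly_mapping_induct_single [case_names zero single add]:
  assumes "P 0" "\<And>m c. P (Poly_Mapping.single m c)" "\<And>p q. P p \<Longrightarrow> P q \<Longrightarrow> P (p + q)"
  shows "P (p :: 'a \<Rightarrow>\<^sub>0 'b::monoid_add)"
proof (induction p rule: update_induct)
  case const then show ?case using assms(1) .
next
  case (update f a b)
  have "Poly_Mapping.update a b f = f + Poly_Mapping.single a b"
    using update(1)
    by (intro poly_mapping_eqI) (auto simp: lookup_update lookup_add lookup_single in_keys_iff when_def)
  then show ?case using assms(2,3) update(3) by metis
qed

subsection \<open>Setting a variable to zero and dividing by it\<close>

text \<open>Every polynomial splits as \<open>p = zero_var j p + x\<^sub>j \<cdot> div_var j p\<close>: \<open>zero_var j p\<close> keeps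
  the monomials of \<open>p\<close> not divisible by \<open>x\<^sub>j\<close>, and \<open>div_var j p\<close> collects the others, divided
  by \<open>x\<^sub>j\<close>.\<close>

definition zero_var :: "nat \<Rightarrow> 'k::comm_ring_1 mpoly \<Rightarrow> 'k mpoly" where
  "zero_var j p =
     Abs_poly_mapping (\<lambda>m. if Poly_Mapping.lookup m j = 0 then Poly_Mapping.lookup p m else 0)"

definition div_var :: "nat \<Rightarrow> 'k::comm_ring_1 mpoly \<Rightarrow> 'k mpoly" where
  "div_var j p = Abs_poly_mapping (\<lambda>m. Poly_Mapping.lookup p (m + Poly_Mapping.single j 1))"

lemma lookup_zero_var:
  "Poly_Mapping.lookup (zero_var j p) m =
     (if Poly_Mapping.lookup m j = 0 then Poly_Mapping.lookup p m else 0)"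
proof -
  have "finite {m. (if Poly_Mapping.lookup m j = 0 then Poly_Mapping.lookup p m else 0) \<noteq> 0}"
    by (rule finite_subset[of _ "Poly_Mapping.keys p"]) (auto simp: in_keys_iff)
  then show ?thesis unfolding zero_var_def by simp
qed

lemma lookup_div_var:
  "Poly_Mapping.lookup (div_var j p) m = Poly_Mapping.lookup p (m + Poly_Mapping.single j 1)"
proof -
  have "finite ((\<lambda>m. m + Poly_Mapping.single j (1::nat)) -` Poly_Mapping.keys p)"
    by (rule finite_vimageI) (auto simp: inj_def)
  moreover have "{m. Poly_Mapping.lookup p (m + Poly_Mapping.single j 1) \<noteq> 0}
      = (\<lambda>m. m + Poly_Mapping.single j 1) -` Poly_Mapping.keys p"
    by (auto simp: in_keys_iff)
  ultimately show ?thesis unfolding div_var_def by simp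
qed

lemma zero_var_0 [simp]: "zero_var j 0 = 0"
  by (intro poly_mapping_eqI) (simp add: lookup_zero_var)

lemma div_var_0 [simp]: "div_var j 0 = 0"
  by (intro poly_mapping_eqI) (simp add: lookup_div_var)

lemma zero_var_add: "zero_var j (p + q) = zero_var j p + zero_var j q"
  by (intro poly_mapping_eqI) (simp add: lookup_zero_var lookup_add)

lemma div_var_add: "div_var j (p + q) = div_var j p + div_var j q"
  by (intro poly_mapping_eqI) (simp add: lookup_div_var lookup_add)

lemma zero_var_single:
  "zero_var j (Poly_Mapping.single m c) =
     (if Poly_Mapping.lookup m j = 0 then Poly_Mapping.single m c else 0)"
  by (intro poly_mapping_eqI) (auto simp: lookup_zero_var lookup_single when_def)

lemma div_var_single:
  "div_var j (Poly_Mapping.single m c) =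
     (if Poly_Mapping.lookup m j = 0 then 0
      else Poly_Mapping.single (m - Poly_Mapping.single j 1) c)"
proof (intro poly_mapping_eqI)
  fix k
  have "m = k + Poly_Mapping.single j 1 \<longleftrightarrow>
      Poly_Mapping.lookup m j \<noteq> 0 \<and> m - Poly_Mapping.single j 1 = k"
    by (auto simp: poly_mapping_eq_iff fun_eq_iff lookup_add lookup_minus lookup_single when_def)
  then show "Poly_Mapping.lookup (div_var j (Poly_Mapping.single m c)) k =
      Poly_Mapping.lookup (if Poly_Mapping.lookup m j = 0 then 0
        else Poly_Mapping.single (m - Poly_Mapping.single j 1) c) k"
    by (auto simp: lookup_div_var lookup_single when_def)
qed

lemma monomial_add_minus_single:
  fixes a b :: "'a \<Rightarrow>\<^sub>0 nat"
  shows "0 < Poly_Mapping.lookup b j \<Longrightarrow>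
      a + b - Poly_Mapping.single j (Suc 0) = a + (b - Poly_Mapping.single j (Suc 0))"
    and "0 < Poly_Mapping.lookup a j \<Longrightarrow>
      a + b - Poly_Mapping.single j (Suc 0) = (a - Poly_Mapping.single j (Suc 0)) + b"
    and "0 < Poly_Mapping.lookup a j \<Longrightarrow> 0 < Poly_Mapping.lookup b j \<Longrightarrow>
      a + (b - Poly_Mapping.single j (Suc 0)) = (a - Poly_Mapping.single j (Suc 0)) + b"
    and "0 < Poly_Mapping.lookup b j \<Longrightarrow>
      Poly_Mapping.single j (Suc 0) + (b - Poly_Mapping.single j (Suc 0)) = b"
  by (intro poly_mapping_eqI; auto simp: lookup_add lookup_minus lookup_single when_def)+

lemma zero_var_mult: "zero_var j (p * q) = zero_var j p * zero_var j q"
proof (induction p rule: poly_mapping_induct_single)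
  case (single m c)
  show ?case
    by (induction q rule: poly_mapping_induct_single)
       (simp_all add: mult_single zero_var_single lookup_add distrib_left zero_var_add)
qed (simp_all add: distrib_right zero_var_add)

lemma div_var_mult: "div_var j (p * q) = div_var j p * q + zero_var j p * div_var j q"
proof (induction p rule: poly_mapping_induct_single)
  case (single m c)
  show ?case
  proof (induction q rule: poly_mapping_induct_single)
    case (single m' c')
    show ?case
      by (auto simp: mult_single zero_var_single div_var_single lookup_add add.commute[of m' m]
          monomial_add_minus_single)
  qed (simp_all add: zero_var_add div_var_add algebra_simps)
qed (simp_all add: zero_var_add div_var_add algebra_simps)

lemma zero_var_var: "zero_var j (var i) = (if i = j then 0 else var i)"
  by (simp add: var_def zero_var_single lookup_single when_def)

lemma div_var_var: "div_var j (var i) = (if i = j then 1 else 0)"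
  by (simp add: var_def div_var_single lookup_single when_def)

lemma zero_var_1 [simp]: "zero_var j 1 = 1"
  by (metis zero_var_single single_one lookup_zero)

lemma div_var_1 [simp]: "div_var j 1 = 0"
  by (metis div_var_single single_one lookup_zero)

lemma zero_var_plus_var_mult_div_var: "zero_var j p + var j * div_var j p = p"
proof (induction p rule: poly_mapping_induct_single)
  case (single m c)
  show ?case by (auto simp: var_def zero_var_single div_var_single mult_single monomial_add_minus_single)
qed (simp_all add: zero_var_add div_var_add algebra_simps)

lemma div_var_mult_var: "div_var j (g * var j) = g"
  using zero_var_plus_var_mult_div_var[of j g]
  by (simp add: div_var_mult div_var_var zero_var_var algebra_simps)

lemma zero_var_prod_var:
  "finite A \<Longrightarrow> zero_var j (prod var A) = (if j \<in> A then 0 else prod var A)"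
  by (induction A rule: finite_induct) (auto simp: zero_var_mult zero_var_var)

lemma div_var_prod_var_notin: "finite A \<Longrightarrow> j \<notin> A \<Longrightarrow> div_var j (prod var A) = 0"
  by (induction A rule: finite_induct) (auto simp: div_var_mult div_var_var zero_var_var)

lemma polyring_0 [simp]: "0 \<in> polyring n"
  by (simp add: polyring_def)

lemma polyring_1 [simp]: "1 \<in> polyring n"
  by (simp add: polyring_def)

lemma polyring_add: "p \<in> polyring n \<Longrightarrow> q \<in> polyring n \<Longrightarrow> p + q \<in> polyring n"
  unfolding polyring_def using keys_add[of p q] by blast

lemma polyring_mult:
  assumes "p \<in> polyring n" "q \<in> polyring n"
  shows "p * q \<in> polyring n"
  unfolding polyring_def
proof (intro CollectI ballI)
  fix m assume "m \<in> Poly_Mapping.keys (p * q)"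
  then obtain a b where "m = a + b" "a \<in> Poly_Mapping.keys p" "b \<in> Poly_Mapping.keys q"
    using keys_mult by blast
  then show "Poly_Mapping.keys m \<subseteq> {1..n}"
    using assms keys_add[of a b] unfolding polyring_def by blast
qed

lemma polyring_var: "1 \<le> i \<Longrightarrow> i \<le> n \<Longrightarrow> var i \<in> polyring n"
  by (simp add: polyring_def var_def)

lemma polyring_prod:
  "finite A \<Longrightarrow> (\<And>i. i \<in> A \<Longrightarrow> f i \<in> polyring n) \<Longrightarrow> prod f A \<in> polyring n"
  by (induction A rule: finite_induct) (auto intro: polyring_mult)

lemma polyring_zero_var: "p \<in> polyring n \<Longrightarrow> zero_var j p \<in> polyring n"
  unfolding polyring_def by (auto simp: in_keys_iff lookup_zero_var split: if_splits)

lemma polyring_div_var: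
  assumes "p \<in> polyring n"
  shows "div_var j p \<in> polyring n"
  unfolding polyring_def
proof (intro CollectI ballI)
  fix m assume "m \<in> Poly_Mapping.keys (div_var j p)"
  then have "m + Poly_Mapping.single j 1 \<in> Poly_Mapping.keys p"
    by (simp add: in_keys_iff lookup_div_var)
  moreover have "Poly_Mapping.keys m \<subseteq> Poly_Mapping.keys (m + Poly_Mapping.single j 1)"
    by (auto simp: in_keys_iff lookup_add)
  ultimately show "Poly_Mapping.keys m \<subseteq> {1..n}"
    using assms unfolding polyring_def by blast
qed

definition is_ideal :: "nat \<Rightarrow> 'k::comm_ring_1 mpoly set \<Rightarrow> bool" where
  "is_ideal n X \<longleftrightarrow>
     0 \<in> X \<and> (\<forall>a\<in>X. \<forall>b\<in>X. a + b \<in> X) \<and> (\<forall>c\<in>polyring n. \<forall>a\<in>X. c * a \<in> X)"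

lemma is_idealD:
  assumes "is_ideal n X"
  shows "0 \<in> X" "a \<in> X \<Longrightarrow> b \<in> X \<Longrightarrow> a + b \<in> X"
    "c \<in> polyring n \<Longrightarrow> a \<in> X \<Longrightarrow> c * a \<in> X" "c \<in> polyring n \<Longrightarrow> a \<in> X \<Longrightarrow> a * c \<in> X"
  using assms unfolding is_ideal_def by (auto simp: mult.commute)

lemma is_ideal_sum:
  assumes "is_ideal n X"
  shows "finite F \<Longrightarrow> (\<And>x. x \<in> F \<Longrightarrow> f x \<in> X) \<Longrightarrow> sum f F \<in> X"
  by (induction F rule: finite_induct) (auto intro: is_idealD[OF assms])

lemma is_ideal_polyring: "is_ideal n (polyring n)"
  unfolding is_ideal_def by (auto intro: polyring_add polyring_mult)

lemma is_ideal_zero: "is_ideal n ({0} :: 'k::comm_ring_1 mpoly set)"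
  unfolding is_ideal_def by auto

lemma mem_ideal_gen:
  "x \<in> ideal_gen n G \<longleftrightarrow>
     (\<exists>F c. x = (\<Sum>g\<in>F. c g * g) \<and> finite F \<and> F \<subseteq> G \<and> (\<forall>g\<in>F. c g \<in> polyring n))"
  unfolding ideal_gen_def by blast

lemma ideal_gen_is_ideal: "is_ideal n (ideal_gen n (G :: 'k::comm_ring_1 mpoly set))"
  unfolding is_ideal_def
proof (intro conjI ballI)
  show "0 \<in> ideal_gen n G"
    unfolding mem_ideal_gen by (rule exI[of _ "{}"]) auto
next
  fix a b assume "a \<in> ideal_gen n G" "b \<in> ideal_gen n G"
  then obtain F1 c1 F2 c2
    where a: "a = (\<Sum>g\<in>F1. c1 g * g)" "finite F1" "F1 \<subseteq> G" "\<forall>g\<in>F1. c1 g \<in> polyring n"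
      and b: "b = (\<Sum>g\<in>F2. c2 g * g)" "finite F2" "F2 \<subseteq> G" "\<forall>g\<in>F2. c2 g \<in> polyring n"
    unfolding mem_ideal_gen by blast
  define c where "c g = (if g \<in> F1 then c1 g else 0) + (if g \<in> F2 then c2 g else 0)" for g
  have "(\<Sum>g\<in>F1 \<union> F2. c g * g)
      = (\<Sum>g\<in>F1 \<union> F2. if g \<in> F1 then c1 g * g else 0)
        + (\<Sum>g\<in>F1 \<union> F2. if g \<in> F2 then c2 g * g else 0)"
    unfolding c_def distrib_right sum.distrib by (intro arg_cong2[where f = "(+)"] sum.cong) auto
  also have "\<dots> = a + b"
    using a b by (simp add: sum.inter_restrict[symmetric] Int_absorb1 Int_absorb2)
  finally have "a + b = (\<Sum>g\<in>F1 \<union> F2. c g * g)" ..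
  moreover have "\<forall>g\<in>F1 \<union> F2. c g \<in> polyring n"
    using a(4) b(4) by (auto simp: c_def intro: polyring_add)
  ultimately show "a + b \<in> ideal_gen n G"
    unfolding mem_ideal_gen using a(2,3) b(2,3) by (intro exI[of _ "F1 \<union> F2"] exI[of _ c]) auto
next
  fix c a :: "'k mpoly" assume c: "c \<in> polyring n" and "a \<in> ideal_gen n G"
  then obtain F d where a: "a = (\<Sum>g\<in>F. d g * g)" "finite F" "F \<subseteq> G" "\<forall>g\<in>F. d g \<in> polyring n"
    unfolding mem_ideal_gen by blast
  have "c * a = (\<Sum>g\<in>F. (c * d g) * g)"
    using a by (simp add: sum_distrib_left mult.assoc)
  moreover have "\<forall>g\<in>F. c * d g \<in> polyring n"
    using a(4) c by (auto intro: polyring_mult)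
  ultimately show "c * a \<in> ideal_gen n G"
    unfolding mem_ideal_gen using a(2,3) by (intro exI[of _ F] exI[of _ "\<lambda>g. c * d g"]) auto
qed

lemma ideal_gen_base: "g \<in> G \<Longrightarrow> g \<in> ideal_gen n G"
  unfolding mem_ideal_gen by (intro exI[of _ "{g}"] exI[of _ "\<lambda>_. 1"]) auto

lemma ideal_gen_least:
  assumes "is_ideal n X" "G \<subseteq> X"
  shows "ideal_gen n G \<subseteq> X"
proof
  fix x assume "x \<in> ideal_gen n G"
  then obtain F d where "x = (\<Sum>g\<in>F. d g * g)" "finite F" "F \<subseteq> G" "\<forall>g\<in>F. d g \<in> polyring n"
    unfolding mem_ideal_gen by blast
  then show "x \<in> X"
    using assms by (auto intro!: is_ideal_sum is_idealD(3))
qed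

lemma ideal_gen_mono: "G \<subseteq> ideal_gen n H \<Longrightarrow> ideal_gen n G \<subseteq> ideal_gen n H"
  by (rule ideal_gen_least[OF ideal_gen_is_ideal])

lemma ideal_gen_polyring: "G \<subseteq> polyring n \<Longrightarrow> ideal_gen n G \<subseteq> polyring n"
  by (rule ideal_gen_least[OF is_ideal_polyring])

lemma ideal_gen_empty: "ideal_gen n {} = ({0} :: 'k::comm_ring_1 mpoly set)"
  using ideal_gen_least[OF is_ideal_zero, of "{}"] is_idealD(1)[OF ideal_gen_is_ideal] by blast

lemma ideal_gen_insert_zero: "ideal_gen n ({0} \<union> G) = ideal_gen n (G :: 'k::comm_ring_1 mpoly set)"
  using is_idealD(1)[OF ideal_gen_is_ideal]
  by (intro equalityI ideal_gen_mono) (auto intro: ideal_gen_base)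

lemma ideal_pow_is_ideal: "is_ideal n (ideal_pow n I s)"
  by (cases s) (auto simp: is_ideal_polyring ideal_mult_def ideal_gen_is_ideal)

lemma ideal_pow_polyring: "I \<subseteq> polyring n \<Longrightarrow> ideal_pow n I s \<subseteq> polyring n"
proof (induction s)
  case (Suc s)
  then show ?case
    unfolding ideal_pow.simps ideal_mult_def by (intro ideal_gen_polyring) (auto intro: polyring_mult)
qed simp

lemma ideal_pow_mono: "I \<subseteq> I' \<Longrightarrow> ideal_pow n I s \<subseteq> ideal_pow n I' s"
proof (induction s)
  case (Suc s)
  then show ?case
    unfolding ideal_pow.simps ideal_mult_def by (intro ideal_gen_mono) (auto intro!: ideal_gen_base)
qed simp

lemma ideal_pow_zero: "ideal_pow n ({0} :: 'k::comm_ring_1 mpoly set) (Suc s) = {0}"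
proof
  show "ideal_pow n {0} (Suc s) \<subseteq> ({0} :: 'k mpoly set)"
    unfolding ideal_pow.simps ideal_mult_def by (rule ideal_gen_least[OF is_ideal_zero]) auto
  show "{0} \<subseteq> ideal_pow n ({0} :: 'k mpoly set) (Suc s)"
    using is_idealD(1)[OF ideal_pow_is_ideal] by blast
qed

subsection \<open>Behaviour of ideals under \<open>zero_var\<close> and \<open>div_var\<close>\<close>

lemma zero_var_ideal_gen:
  assumes Y: "is_ideal n (Y :: 'k::comm_ring_1 mpoly set)" and G: "\<forall>g\<in>G. zero_var j g \<in> Y"
    and p: "p \<in> ideal_gen n G"
  shows "zero_var j p \<in> Y"
proof -
  have "is_ideal n {p. zero_var j p \<in> Y}"
    unfolding is_ideal_def using Y
    by (auto simp: zero_var_add zero_var_mult intro: is_idealD polyring_zero_var)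
  then have "ideal_gen n G \<subseteq> {p. zero_var j p \<in> Y}"
    by (rule ideal_gen_least) (use G in auto)
  then show ?thesis using p by blast
qed

lemma zero_var_ideal_pow:
  assumes "\<forall>p\<in>I. zero_var j p \<in> J"
  shows "p \<in> ideal_pow n I s \<Longrightarrow> zero_var j p \<in> ideal_pow n J s"
proof (induction s arbitrary: p)
  case 0 then show ?case by (simp add: polyring_zero_var)
next
  case (Suc s)
  have "\<forall>g\<in>{a * b |a b. a \<in> ideal_pow n I s \<and> b \<in> I}.
      zero_var j g \<in> ideal_gen n {a * b |a b. a \<in> ideal_pow n J s \<and> b \<in> J}"
    using Suc.IH assms by (force simp: zero_var_mult intro: ideal_gen_base)
  then show ?case
    using Suc.prems unfolding ideal_pow.simps ideal_mult_def
    by (blast intro: zero_var_ideal_gen[OF ideal_gen_is_ideal])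
qed

definition var_stable :: "nat \<Rightarrow> 'k::comm_ring_1 mpoly set \<Rightarrow> bool" where
  "var_stable j Y \<longleftrightarrow> (\<forall>p\<in>Y. div_var j p \<in> Y \<and> zero_var j p \<in> Y)"

lemma var_stable_ideal_gen:
  fixes G :: "'k::comm_ring_1 mpoly set"
  assumes G: "\<forall>g\<in>G. div_var j g \<in> ideal_gen n G \<and> zero_var j g \<in> ideal_gen n G"
  shows "var_stable j (ideal_gen n G)"
proof -
  let ?Y = "ideal_gen n G"
  have Y: "is_ideal n ?Y" by (rule ideal_gen_is_ideal)
  have "is_ideal n {p \<in> ?Y. div_var j p \<in> ?Y \<and> zero_var j p \<in> ?Y}"
    unfolding is_ideal_def
  proof (intro conjI ballI)
    fix c a :: "'k mpoly"
    assume c: "c \<in> polyring n" and "a \<in> {p \<in> ?Y. div_var j p \<in> ?Y \<and> zero_var j p \<in> ?Y}"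
    then have a: "a \<in> ?Y" "div_var j a \<in> ?Y" "zero_var j a \<in> ?Y" by auto
    have "div_var j (c * a) \<in> ?Y"
      unfolding div_var_mult using a c
      by (intro is_idealD(2,3)[OF Y] polyring_div_var polyring_zero_var)
    moreover have "zero_var j (c * a) \<in> ?Y"
      unfolding zero_var_mult using a c by (intro is_idealD(3)[OF Y] polyring_zero_var)
    ultimately show "c * a \<in> {p \<in> ?Y. div_var j p \<in> ?Y \<and> zero_var j p \<in> ?Y}"
      using a c by (simp add: is_idealD(3)[OF Y])
  qed (auto simp: div_var_add zero_var_add intro: is_idealD[OF Y])
  then have "?Y \<subseteq> {p \<in> ?Y. div_var j p \<in> ?Y \<and> zero_var j p \<in> ?Y}"
    by (rule ideal_gen_least) (use G in \<open>auto intro: ideal_gen_base\<close>)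
  then show ?thesis unfolding var_stable_def by blast
qed

lemma var_stable_ideal_mult:
  assumes I: "var_stable j I" and J: "var_stable j J"
  shows "var_stable j (ideal_mult n I J)"
  unfolding ideal_mult_def
proof (intro var_stable_ideal_gen ballI)
  let ?G = "{a * b |a b. a \<in> I \<and> b \<in> J}"
  fix g assume "g \<in> ?G"
  then obtain a b where g: "g = a * b" "a \<in> I" "b \<in> J" by blast
  then have "div_var j a * b \<in> ideal_gen n ?G" "zero_var j a * div_var j b \<in> ideal_gen n ?G"
      "zero_var j a * zero_var j b \<in> ideal_gen n ?G"
    using I J unfolding var_stable_def by (blast intro: ideal_gen_base)+
  then show "div_var j g \<in> ideal_gen n ?G \<and> zero_var j g \<in> ideal_gen n ?G"
    unfolding g div_var_mult zero_var_mult by (simp add: is_idealD(2)[OF ideal_gen_is_ideal])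
qed

lemma var_stable_polyring: "var_stable j (polyring n)"
  unfolding var_stable_def by (auto intro: polyring_div_var polyring_zero_var)

lemma var_stable_ideal_pow: "var_stable j I \<Longrightarrow> var_stable j (ideal_pow n I s)"
  by (induction s) (simp_all add: var_stable_ideal_mult var_stable_polyring)

lemma var_stable_cancel_prod_var:
  assumes "finite A" "\<forall>j\<in>A. var_stable j Y"
  shows "g * prod var A \<in> Y \<Longrightarrow> g \<in> Y"
  using assms
proof (induction A arbitrary: g rule: finite_induct)
  case (insert a A)
  then have "g * var a \<in> Y"
    by (simp add: mult.assoc)
  then have "div_var a (g * var a) \<in> Y"
    using insert.prems unfolding var_stable_def by blast
  then show ?case by (simp only: div_var_mult_var)
qed simp

lemma colon_prod_var_subset:
  assumes zero_var_IJ: "\<forall>p\<in>I. zero_var j p \<in> J"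
    and V: "finite V" "j \<notin> V" "\<forall>i\<in>V. var_stable i J"
    and f: "f \<in> colon n (ideal_pow n I s) (prod var V)"
  shows "f \<in> ideal_gen n (ideal_pow n J s \<union> {var j})"
proof -
  have "zero_var j (f * prod var V) \<in> ideal_pow n J s"
    using f zero_var_ideal_pow[OF zero_var_IJ] unfolding colon_def by blast
  then have "zero_var j f * prod var V \<in> ideal_pow n J s"
    using V by (simp add: zero_var_mult zero_var_prod_var)
  then have "zero_var j f \<in> ideal_pow n J s"
    using V by (auto intro: var_stable_cancel_prod_var var_stable_ideal_pow)
  moreover have "div_var j f \<in> polyring n"
    using f unfolding colon_def by (blast intro: polyring_div_var)
  ultimately have "zero_var j f + div_var j f * var j \<in> ideal_gen n (ideal_pow n J s \<union> {var j})"
    by (blast intro: ideal_gen_base is_idealD[OF ideal_gen_is_ideal])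
  then show ?thesis
    using zero_var_plus_var_mult_div_var[of j f] by (simp add: mult.commute)
qed

lemma ideal_pow_subset_colon:
  assumes "J \<subseteq> I" "J \<subseteq> polyring n" "u \<in> polyring n"
  shows "ideal_pow n J s \<subseteq> colon n (ideal_pow n I s) u"
proof
  fix g assume g: "g \<in> ideal_pow n J s"
  then have "g * u \<in> ideal_pow n I s"
    using ideal_pow_mono[OF assms(1)] assms(3) by (blast intro: is_idealD(4)[OF ideal_pow_is_ideal])
  then show "g \<in> colon n (ideal_pow n I s) u"
    using g ideal_pow_polyring[OF assms(2)] unfolding colon_def by blast
qed

lemma ideal_gen_colon_prod_var_insert_var:
  fixes I J :: "'k::comm_ring_1 mpoly set"
  assumes "J \<subseteq> I" "J \<subseteq> polyring n" "(prod var V :: 'k mpoly) \<in> polyring n"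
    and "\<forall>p\<in>I. zero_var j p \<in> J" "finite V" "j \<notin> V" "\<forall>i\<in>V. var_stable i J"
  shows "ideal_gen n (colon n (ideal_pow n I s) (prod var V) \<union> {var j})
       = ideal_gen n (ideal_pow n J s \<union> {var j})"
proof
  show "ideal_gen n (colon n (ideal_pow n I s) (prod var V) \<union> {var j})
      \<subseteq> ideal_gen n (ideal_pow n J s \<union> {var j})"
    using colon_prod_var_subset[OF assms(4-7)] ideal_gen_base[of "var j"]
    by (intro ideal_gen_mono) blast
  have "ideal_pow n J s \<subseteq> colon n (ideal_pow n I s) (prod var V)"
    using assms(1-3) by (rule ideal_pow_subset_colon)
  then show "ideal_gen n (ideal_pow n J s \<union> {var j})
      \<subseteq> ideal_gen n (colon n (ideal_pow n I s) (prod var V) \<union> {var j})"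
    by (intro ideal_gen_mono) (blast intro: ideal_gen_base)
qed
subsection \<open>Path ideals of the line graph\<close>

lemma path_mon_polyring: "1 \<le> i \<Longrightarrow> i + t \<le> n + 1 \<Longrightarrow> path_mon t i \<in> polyring n"
  unfolding path_mon_def by (intro polyring_prod) (auto intro: polyring_var)

lemma path_ideal_polyring: "m \<le> n \<Longrightarrow> path_ideal n t m \<subseteq> polyring n"
  unfolding path_ideal_def by (intro ideal_gen_polyring) (auto intro: path_mon_polyring)

lemma path_ideal_mono: "m \<le> m' \<Longrightarrow> path_ideal n t m \<subseteq> path_ideal n t m'"
  unfolding path_ideal_def by (intro ideal_gen_mono) (fastforce intro!: ideal_gen_base)

lemma path_ideal_eq_zero:
  assumes "m < t"
  shows "path_ideal n t m = ({0} :: 'k::comm_ring_1 mpoly set)"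
proof -
  have "{path_mon t i :: 'k mpoly |i. 1 \<le> i \<and> i + t \<le> m + 1} = {}"
    using assms by auto
  then show ?thesis unfolding path_ideal_def by (simp only: ideal_gen_empty)
qed

lemma var_stable_path_ideal:
  assumes "m < j"
  shows "var_stable j (path_ideal n t m :: 'k::comm_ring_1 mpoly set)"
  unfolding path_ideal_def
proof (intro var_stable_ideal_gen ballI)
  let ?G = "{path_mon t i :: 'k mpoly |i. 1 \<le> i \<and> i + t \<le> m + 1}"
  fix g assume "g \<in> ?G"
  then obtain i where "g = path_mon t i" "i + t \<le> m + 1" by blast
  with assms have "div_var j g = 0" "zero_var j g = g"
    unfolding path_mon_def by (simp_all add: div_var_prod_var_notin zero_var_prod_var)
  then show "div_var j g \<in> ideal_gen n ?G \<and> zero_var j g \<in> ideal_gen n ?G"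
    using \<open>g \<in> ?G\<close> is_idealD(1)[OF ideal_gen_is_ideal] by (auto intro: ideal_gen_base)
qed

text \<open>Setting \<open>x\<^sub>k = 0\<close> kills every generator \<open>u\<^sub>i\<close> with \<open>i \<le> k < i + t\<close>; the hypothesis
  \<open>m < k + t\<close> says that the remaining generators of \<open>I\<^sub>t(L\<^sub>m)\<close> all lie to the left of \<open>x\<^sub>k\<close>.\<close>

lemma zero_var_path_ideal:
  assumes "m < k + t" and "p \<in> (path_ideal n t m :: 'k::comm_ring_1 mpoly set)"
  shows "zero_var k p \<in> path_ideal n t (k - 1)"
  using assms(2) unfolding path_ideal_def
proof (rule zero_var_ideal_gen[OF ideal_gen_is_ideal, rotated], intro ballI)
  fix g :: "'k mpoly" assume "g \<in> {path_mon t i |i. 1 \<le> i \<and> i + t \<le> m + 1}"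
  then obtain i where g: "g = path_mon t i" "1 \<le> i" "i + t \<le> m + 1" by blast
  show "zero_var k g \<in> ideal_gen n {path_mon t i |i. 1 \<le> i \<and> i + t \<le> k - 1 + 1}"
  proof (cases "i + t \<le> k")
    case True
    then show ?thesis
      using g by (auto simp: path_mon_def zero_var_prod_var intro!: ideal_gen_base)
  next
    case False
    with g assms(1) have "zero_var k g = 0"
      by (simp add: path_mon_def zero_var_prod_var)
    then show ?thesis using is_idealD(1)[OF ideal_gen_is_ideal] by simp
  qed
qed

theorem lemma3p7:
  fixes n t s :: nat
  assumes "n \<ge> t + 1" and "t \<ge> 1" and "s \<ge> 2"
  shows "ideal_gen n (colon n (ideal_pow n (path_ideal n t (n - 1) :: 'k::field mpoly set) s)
              (path_mon t (n - t + 1)) \<union> {var (n - t)})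
       = ideal_gen n (ideal_pow n (path_ideal n t (n - t - 1)) s \<union> {var (n - t)})
     \<and> (n \<le> 2 * t \<longrightarrow> path_ideal n t (n - t - 1) = ({0} :: 'k mpoly set)
          \<and> ideal_gen n (colon n (ideal_pow n (path_ideal n t (n - 1) :: 'k mpoly set) s)
              (path_mon t (n - t + 1)) \<union> {var (n - t)}) = ideal_gen n {var (n - t)})"
proof -
  let ?I = "path_ideal n t (n - 1) :: 'k mpoly set"
  let ?J = "path_ideal n t (n - t - 1) :: 'k mpoly set"
  let ?C = "colon n (ideal_pow n ?I s) (path_mon t (n - t + 1))"
  let ?V = "{n - t + 1..<n - t + 1 + t}"
  have main: "ideal_gen n (?C \<union> {var (n - t)}) = ideal_gen n (ideal_pow n ?J s \<union> {var (n - t)})"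
    unfolding path_mon_def
  proof (rule ideal_gen_colon_prod_var_insert_var)
    show "?J \<subseteq> ?I" "?J \<subseteq> polyring n"
      by (simp_all add: path_ideal_mono path_ideal_polyring)
    show "prod var ?V \<in> polyring n"
      using path_mon_polyring[of "n - t + 1" t n] assms(1) by (simp add: path_mon_def)
    show "\<forall>p\<in>?I. zero_var (n - t) p \<in> ?J"
      using assms(1) zero_var_path_ideal[of "n - 1" "n - t" t] by auto
    show "\<forall>i\<in>?V. var_stable i ?J"
      by (intro ballI var_stable_path_ideal) auto
  qed auto
  moreover have "?J = {0} \<and> ideal_gen n (?C \<union> {var (n - t)}) = ideal_gen n {var (n - t)}"
    if "n \<le> 2 * t"
  proof
    show J_zero: "?J = {0}"
      using that assms(1) by (intro path_ideal_eq_zero) simp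
    obtain s' where "s = Suc s'"
      using assms(3) by (cases s) auto
    then have "ideal_pow n ?J s = {0}"
      unfolding J_zero by (simp only: ideal_pow_zero)
    then show "ideal_gen n (?C \<union> {var (n - t)}) = ideal_gen n {var (n - t)}"
      unfolding main by (simp only: ideal_gen_insert_zero)
  qed
  ultimately show ?thesis by blast
qed

end
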